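(* Consider the networked closed-loop system described in the context (plant with bounded additive disturbance, local nominal model with consistent actuator and ancillary controller, remote estimator and tube-based tracking MPC), and suppose the initial plant and nominal states satisfy $x(0)-x_{n}(0)\in\mathbb{Z}_K$. If at time step $k$ the consistency indicator satisfies $\Theta_k=1$, then $x(k)\in\{\hat{x}(k|k-1)\}\oplus\mathbb{Z}_K$.
   Context: Plant: $x(k+1)=Ax(k)+Bu(k)+w(k)$ with $x(k)\in\mathbb{R}^{n_x}$, $u(k)\in\mathbb{R}^{n_u}$, $(A,B)$ stabilizable, and $w(k)\in\mathbb{W}=\{w: H_w w\le h_w\}$ for all $k$, where $\mathbb{W}$ is compact and contains the origin in its interior. State and input constraint sets $\mathbb{X}=\{x:H_x x\le h_x\}$, $\mathbb{U}=\{u:H_u u\le h_u\}$ are bounded and contain the origin in their interior. The Minkowski sum is $\oplus$, the Pontryagin difference is $\ominus$, and $M\mathbb{P}=\{Mp:p\in\mathbb{P}\}$. Network: binary variables $\theta_k$ ($=1$ iff the packet $U_k$ sent by the remote controller at time $k$ is received by the plant) and $\gamma_k$ ($=1$ iff the packet $X_k$ sent by the plant at time $k$ is received by the controller). Sets: $K$ is a gain with spectral radius $\rho(A-BK)<1$, and $\mathbb{Z}_K=\bigoplus_{i=0}^\infty (A-BK)^i\mathbb{W}$. Tightened sets: $\mathbb{X}_c=\mathbb{X}\ominus\mathbb{Z}_K$, $\mathbb{U}_c=\mathbb{U}\ominus(-K)\mathbb{Z}_K$. $\bar K$ is a gain with $\rho(A-B\bar K)<1$. With $x_a=(x_n,\bar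 x,\bar u)$ and $A_a=\begin{bmatrix}A-B\bar K & B\bar K & B\\ 0& I&0\\0&0&I\end{bmatrix}$, let $X_{f,\bar K}=\{x_a: A_a^k x_a\in\mathbb{X}_{a,\bar K}\ \forall k\ge0\}$, where $\mathbb{X}_{a,\bar K}=\{x_a: x_n\in\mathbb{X}_c,\ \bar u-\bar K(x_n-\bar x)\in\mathbb{U}_c\}$, and for fixed $\lambda\in(0,1)$, $X^\lambda_{f,\bar K}=X_{f,\bar K}\cap\{(x_n,\bar x,\bar u):\bar x\in\lambda\mathbb{X}_c,\ \bar u\in\lambda\mathbb{U}_c\}$. Remote MPC at time $k$ (horizon $N$, symmetric $Q\ge0$, $R>0$, $T>0$, $P$ solving $P=(A-B\bar K)^\top P(A-B\bar K)+Q+\bar K^\top R\bar K$, reference $x_r$): minimize over $\mathbf{u}(0),\dots,\mathbf{u}(N-1),\bar x,\bar u$ the cost $\sum_{i=0}^{N-1}(\|\mathbf{x}(i)-\bar x\|_Q^2+\|\mathbf{u}(i)-\bar u\|_R^2)+\|\mathbf{x}(N)-\bar x\|_P^2+\|\bar x-x_r\|_T^2$ subject to $\mathbf{x}(i+1)=A\mathbf{x}(i)+B\mathbf{u}(i)$, $\mathbf{x}(i)\in\mathbb{X}_c$, $\mathbf{u}(i)\in\mathbb{U}_c$ for $i=0,\dots,N-1$, $\mathbf{x}(0)=\hat x(k|k-1)$, $(\mathbf{x}(N),\bar x,\bar u)\in X^\lambda_{f,\bar K}$, and $(A-I)\bar x+B\bar u=0$. With optimal solution $\mathbf{u}^*_k,\bar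 x^*_k,\bar u^*_k$, the controller sends $U_k=\{\mathbf{u}^*_k,\ \bar u^*_k+\bar K\bar x^*_k,\ q_k\}$. Local side: $\Theta_k=\prod_{i=q_k+1}^k\theta_i$ if $\theta_k=1$ and $\Theta_k=0$ otherwise (with $q_k$ taken from the packet $U_k$); $s_k=\Theta_k k+(1-\Theta_k)s_{k-1}$. Nominal input (consistent actuator): $u_n(k)=\mathbf{u}^*_{s_k}(k-s_k)$ if $k-s_k<N$, else $u_n(k)=\bar u^*_{s_k}+\bar K\bar x^*_{s_k}-\bar K x_n(k)$. Nominal model $x_n(k+1)=Ax_n(k)+Bu_n(k)$. Applied input (ancillary controller) $u(k)=u_n(k)-K(x(k)-x_n(k))$. The plant sends $X_k=\{x_n(k),s_k\}$. Remote estimator: $\hat x(k+1|k)=A\hat x(k|k)+B\hat u(k|k)$ with $\hat x(k|k)=\gamma_k x_n(k)+(1-\gamma_k)\hat x(k|k-1)$, $\hat u(k|k)=\gamma_k u_n(k)+(1-\gamma_k)\mathbf{u}^*_k(0)$ (where $u_n(k)$ is recomputed remotely by the consistent actuator rule from the received $s_k$), and $q_{k+1}=\gamma_k k+(1-\gamma_k)q_k$. *)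

theory Defs
  imports "HOL-Analysis.Analysis"
begin

definition matpow :: "real^'n^'n \<Rightarrow> nat \<Rightarrow> real^'n^'n" where
  "matpow M i = ((\<lambda>X. M ** X) ^^ i) (mat 1)"

definition cmat :: "real^'n^'n \<Rightarrow> complex^'n^'n" where
  "cmat M = (\<chi> i j. complex_of_real (M $ i $ j))"

definition spectral_radius :: "real^'n^'n \<Rightarrow> real" where
  "spectral_radius M =
     Sup {cmod l | l. \<exists>v::complex^'n. v \<noteq> 0 \<and> cmat M *v v = l *s v}"

definition stabilizable :: "real^'n^'n \<Rightarrow> real^'m^'n \<Rightarrow> bool" where
  "stabilizable A B \<longleftrightarrow> (\<exists>F::real^'n^'m. spectral_radius (A - B ** F) < 1)"

definition minkowski_sum :: "('a::ab_group_add) set \<Rightarrow> 'a set \<Rightarrow> 'a set" (infixl "\<oplus>\<^sub>M" 65) where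
  "S \<oplus>\<^sub>M T = {s + t | s t. s \<in> S \<and> t \<in> T}"

definition pontryagin_diff :: "('a::ab_group_add) set \<Rightarrow> 'a set \<Rightarrow> 'a set" (infixl "\<ominus>\<^sub>P" 65) where
  "S \<ominus>\<^sub>P T = {x. \<forall>t\<in>T. x + t \<in> S}"

text \<open>Infinite Minkowski sum  Z_K = (+)_{i>=0} (A-BK)^i W, as the set of sums of
  convergent series  sum_i (A-BK)^i w_i  with all w_i in W.\<close>
definition Zset :: "real^'n^'n \<Rightarrow> (real^'n) set \<Rightarrow> (real^'n) set" where
  "Zset M W = {z. \<exists>w. (\<forall>i. w i \<in> W) \<and> (\<lambda>i. matpow M i *v w i) sums z}"

definition psd :: "real^'n^'n \<Rightarrow> bool" where
  "psd M \<longleftrightarrow> transpose M = M \<and> (\<forall>x. 0 \<le> x \<bullet> (M *v x))"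

definition pd :: "real^'n^'n \<Rightarrow> bool" where
  "pd M \<longleftrightarrow> transpose M = M \<and> (\<forall>x. x \<noteq> 0 \<longrightarrow> 0 < x \<bullet> (M *v x))"

definition wnorm2 :: "real^'n^'n \<Rightarrow> real^'n \<Rightarrow> real" where
  "wnorm2 M x = x \<bullet> (M *v x)"

text \<open>The augmented dynamics x_a(k+1) = A_a x_a(k) with
  A_a = [[A - B Kb, B Kb, B],[0,I,0],[0,0,I]], written blockwise.\<close>
definition Aa_step :: "real^'nx^'nx \<Rightarrow> real^'nu^'nx \<Rightarrow> real^'nx^'nu
     \<Rightarrow> ((real^'nx) \<times> (real^'nx) \<times> (real^'nu)) \<Rightarrow> ((real^'nx) \<times> (real^'nx) \<times> (real^'nu))" where
  "Aa_step A B Kb xa = (case xa of (xn, xb, ub) \<Rightarrow>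
      ((A - B ** Kb) *v xn + (B ** Kb) *v xb + B *v ub, xb, ub))"

definition Xa_set :: "real^'nx^'nu \<Rightarrow> (real^'nx) set \<Rightarrow> (real^'nu) set
     \<Rightarrow> ((real^'nx) \<times> (real^'nx) \<times> (real^'nu)) set" where
  "Xa_set Kb Xc Uc = {(xn, xb, ub). xn \<in> Xc \<and> ub - Kb *v (xn - xb) \<in> Uc}"

definition Xf_set :: "real^'nx^'nx \<Rightarrow> real^'nu^'nx \<Rightarrow> real^'nx^'nu \<Rightarrow> (real^'nx) set
     \<Rightarrow> (real^'nu) set \<Rightarrow> ((real^'nx) \<times> (real^'nx) \<times> (real^'nu)) set" where
  "Xf_set A B Kb Xc Uc = {xa. \<forall>k. (Aa_step A B Kb ^^ k) xa \<in> Xa_set Kb Xc Uc}"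

definition Xf_lambda :: "real \<Rightarrow> real^'nx^'nx \<Rightarrow> real^'nu^'nx \<Rightarrow> real^'nx^'nu
     \<Rightarrow> (real^'nx) set \<Rightarrow> (real^'nu) set \<Rightarrow> ((real^'nx) \<times> (real^'nx) \<times> (real^'nu)) set" where
  "Xf_lambda lam A B Kb Xc Uc = Xf_set A B Kb Xc Uc \<inter>
     {(xn, xb, ub). xb \<in> (\<lambda>x. lam *\<^sub>R x) ` Xc \<and> ub \<in> (\<lambda>u. lam *\<^sub>R u) ` Uc}"

fun pred :: "real^'nx^'nx \<Rightarrow> real^'nu^'nx \<Rightarrow> real^'nx \<Rightarrow> (nat \<Rightarrow> real^'nu) \<Rightarrow> nat \<Rightarrow> real^'nx" where
  "pred A B x0 u 0 = x0"
| "pred A B x0 u (Suc i) = A *v pred A B x0 u i + B *v u i"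

definition mpc_feasible ::
  "real^'nx^'nx \<Rightarrow> real^'nu^'nx \<Rightarrow> real^'nx^'nu \<Rightarrow> real \<Rightarrow> nat
   \<Rightarrow> (real^'nx) set \<Rightarrow> (real^'nu) set \<Rightarrow> real^'nx
   \<Rightarrow> (nat \<Rightarrow> real^'nu) \<Rightarrow> real^'nx \<Rightarrow> real^'nu \<Rightarrow> bool" where
  "mpc_feasible A B Kb lam N Xc Uc x0 u xb ub \<longleftrightarrow>
     (\<forall>i<N. pred A B x0 u i \<in> Xc \<and> u i \<in> Uc) \<and>
     (pred A B x0 u N, xb, ub) \<in> Xf_lambda lam A B Kb Xc Uc \<and>
     (A - mat 1) *v xb + B *v ub = 0"

definition mpc_cost ::
  "real^'nx^'nx \<Rightarrow> real^'nu^'nx \<Rightarrow> nat \<Rightarrow> real^'nx^'nx \<Rightarrow> real^'nu^'nu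
   \<Rightarrow> real^'nx^'nx \<Rightarrow> real^'nx^'nx \<Rightarrow> real^'nx \<Rightarrow> real^'nx
   \<Rightarrow> (nat \<Rightarrow> real^'nu) \<Rightarrow> real^'nx \<Rightarrow> real^'nu \<Rightarrow> real" where
  "mpc_cost A B N Q R P T xr x0 u xb ub =
     (\<Sum>i<N. wnorm2 Q (pred A B x0 u i - xb) + wnorm2 R (u i - ub))
     + wnorm2 P (pred A B x0 u N - xb) + wnorm2 T (xb - xr)"

definition mpc_optimal ::
  "real^'nx^'nx \<Rightarrow> real^'nu^'nx \<Rightarrow> real^'nx^'nu \<Rightarrow> real \<Rightarrow> nat
   \<Rightarrow> (real^'nx) set \<Rightarrow> (real^'nu) set
   \<Rightarrow> real^'nx^'nx \<Rightarrow> real^'nu^'nu \<Rightarrow> real^'nx^'nx \<Rightarrow> real^'nx^'nx \<Rightarrow> real^'nx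
   \<Rightarrow> real^'nx \<Rightarrow> (nat \<Rightarrow> real^'nu) \<Rightarrow> real^'nx \<Rightarrow> real^'nu \<Rightarrow> bool" where
  "mpc_optimal A B Kb lam N Xc Uc Q R P T xr x0 u xb ub \<longleftrightarrow>
     mpc_feasible A B Kb lam N Xc Uc x0 u xb ub \<and>
     (\<forall>u' xb' ub'. mpc_feasible A B Kb lam N Xc Uc x0 u' xb' ub' \<longrightarrow>
        mpc_cost A B N Q R P T xr x0 u xb ub \<le> mpc_cost A B N Q R P T xr x0 u' xb' ub')"

text \<open>Consistency indicator  Theta_k = prod_{i=q_k+1}^k theta_i  if theta_k = 1, else 0.
  q takes integer values (q_0 = -1).\<close>
definition Theta :: "(nat \<Rightarrow> bool) \<Rightarrow> (nat \<Rightarrow> int) \<Rightarrow> nat \<Rightarrow> nat" where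
  "Theta \<theta> q k = (if \<theta> k then (\<Prod>i\<in>{i. q k + 1 \<le> int i \<and> i \<le> k}. of_bool (\<theta> i)) else 0)"

end

theory Submission
  imports Defs
begin

text \<open>The error \<open>e = x - x\<^sub>n\<close> between plant and nominal model obeys
  \<open>e(j+1) = (A - BK) e(j) + w(j)\<close>, and \<open>Z\<^sub>K\<close> is invariant under \<open>z \<mapsto> (A - BK) z + w\<close> for
  \<open>w \<in> W\<close>, so \<open>x(k) - x\<^sub>n(k) \<in> Z\<^sub>K\<close> for all \<open>k\<close>. If \<open>\<Theta>\<^sub>k = 1\<close>, every control packet
  sent after the last successful uplink \<open>q\<^sub>k\<close> has arrived, so at each of these times the
  actuator applied the first input of the fresh plan, which is exactly the input the
  remote estimator assumed when it predicted open loop from the received \<open>x\<^sub>n(q\<^sub>k)\<close>.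
  Hence the prediction \<open>x\<^sub>p(k) = x(k|k-1)\<close> equals \<open>x\<^sub>n(k)\<close>.\<close>

lemma matpow_Suc: "matpow M (Suc i) = M ** matpow M i"
  by (simp add: matpow_def)

lemma Zset_mult_add_mem:
  assumes z: "z \<in> Zset M W" and v: "v \<in> W"
  shows "M *v z + v \<in> Zset M W"
proof -
  obtain w where w: "\<forall>i. w i \<in> W" "(\<lambda>i. matpow M i *v w i) sums z"
    using z unfolding Zset_def by blast
  define w' where "w' = case_nat v w"
  have "(\<lambda>i. M *v (matpow M i *v w i)) sums (M *v z)"
    using bounded_linear.sums[OF matrix_vector_mul_bounded_linear w(2)] .
  then have "(\<lambda>i. matpow M (Suc i) *v w' (Suc i)) sums (M *v z)"
    by (simp add: w'_def matpow_Suc matrix_vector_mul_assoc)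
  then have "(\<lambda>i. matpow M i *v w' i) sums (M *v z + matpow M 0 *v w' 0)"
    by (subst (asm) sums_Suc_iff)
  then have "(\<lambda>i. matpow M i *v w' i) sums (M *v z + v)"
    by (simp add: w'_def matpow_def)
  moreover have "\<forall>i. w' i \<in> W"
    using w(1) v by (simp add: w'_def split: nat.split)
  ultimately show ?thesis
    unfolding Zset_def by blast
qed

lemma Zset_trajectory:
  assumes "e 0 \<in> Zset M W" and "\<And>j. w j \<in> W"
    and "\<And>j. e (Suc j) = M *v e j + w j"
  shows "e j \<in> Zset M W"
  by (induction j) (simp_all add: assms Zset_mult_add_mem)

lemma ancillary_error_step:
  fixes A :: "real^'n^'n" and B :: "real^'m^'n" and K :: "real^'n^'m"
  assumes "x' = A *v x + B *v u + w" and "u = un - K *v (x - xn)"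
    and "xn' = A *v xn + B *v un"
  shows "x' - xn' = (A - B ** K) *v (x - xn) + w"
  using assms
  by (simp add: matrix_vector_mul_assoc[symmetric] algebra_simps)

lemma Theta_one_iff:
  "Theta \<theta> q k = 1 \<longleftrightarrow> \<theta> k \<and> (\<forall>i. q k + 1 \<le> int i \<and> i \<le> k \<longrightarrow> \<theta> i)"
proof -
  have "(\<Prod>i\<in>{i. q k + 1 \<le> int i \<and> i \<le> k}. (of_bool (\<theta> i)::nat)) =
        (if \<forall>i\<in>{i. q k + 1 \<le> int i \<and> i \<le> k}. \<theta> i then 1 else 0)"
    by (auto intro!: prod.neutral)
  then show ?thesis
    unfolding Theta_def by auto
qed

text \<open>\<open>q m\<close> is the last time before \<open>m\<close> at which the controller received the plant's
  packet, with \<open>-1\<close> standing for ``never''.\<close>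

locale reception_index =
  fixes \<gamma> :: "nat \<Rightarrow> bool" and q :: "nat \<Rightarrow> int"
  assumes q_0: "q 0 = -1"
    and q_Suc: "q (Suc j) = (if \<gamma> j then int j else q j)"
begin

lemma q_less: "q m < int m"
  by (induction m) (auto simp: q_0 q_Suc)

lemma q_ge: "-1 \<le> q m"
  by (induction m) (auto simp: q_0 q_Suc)

lemma q_eq_imp_received: "q m = int i \<Longrightarrow> \<gamma> i"
  by (induction m) (auto simp: q_0 q_Suc split: if_splits)

lemma received_le_q: "\<gamma> i \<Longrightarrow> i < m \<Longrightarrow> int i \<le> q m"
proof (induction m)
  case (Suc m)
  then show ?case
    using q_less[of m] by (cases "i = m") (auto simp: q_Suc less_Suc_eq)
qed simp

lemma q_mono: "m \<le> n \<Longrightarrow> q m \<le> q n"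
  by (rule lift_Suc_mono_le) (simp add: q_Suc less_imp_le[OF q_less])

lemma q_const_on_window:
  assumes "q k < int m" and "m \<le> k"
  shows "q m = q k"
proof (rule antisym)
  show "q m \<le> q k"
    using q_mono[OF \<open>m \<le> k\<close>] .
  show "q k \<le> q m"
  proof (cases "q k = -1")
    case False
    then have "0 \<le> q k"
      using q_ge[of k] by simp
    then obtain i where i: "q k = int i"
      using nonneg_int_cases by blast
    then show ?thesis
      using received_le_q[OF q_eq_imp_received[OF i]] assms by simp
  qed (use q_ge in simp)
qed

lemma Theta_one_on_window:
  assumes "Theta \<theta> q k = 1" and "q k < int i" and "i \<le> k"
  shows "Theta \<theta> q i = 1"
proof -
  have "\<theta> k" and "\<And>j. q k + 1 \<le> int j \<Longrightarrow> j \<le> k \<Longrightarrow> \<theta> j"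
    using assms(1) Theta_one_iff by blast+
  moreover have "q i = q k"
    using q_const_on_window[OF assms(2,3)] .
  ultimately show ?thesis
    unfolding Theta_one_iff using assms(2,3) by auto
qed

lemma estimate_eq_nominal_on_window:
  assumes est_x: "\<And>j. xh j = (if \<gamma> j then xn j else xp j)"
    and est_u: "\<And>j. uh j = (if \<gamma> j then un j else u_plan j)"
    and est_pred: "\<And>j. xp (Suc j) = A *v xh j + B *v uh j"
    and est_0: "xp 0 = xn 0"
    and nominal: "\<And>j. xn (Suc j) = A *v xn j + B *v un j"
    and first_input: "\<And>i. q k < int i \<Longrightarrow> i \<le> k \<Longrightarrow> un i = u_plan i"
  shows "q k < int i \<Longrightarrow> i \<le> k \<Longrightarrow> xp i = xn i"
proof (induction i)
  case 0
  then show ?case using est_0 by simp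
next
  case (Suc i)
  show ?case
  proof (cases "q k < int i")
    case True
    then have "\<not> \<gamma> i"
      using received_le_q[of i k] Suc.prems by auto
    then have "xp (Suc i) = A *v xp i + B *v u_plan i"
      using est_pred est_x est_u by simp
    also have "\<dots> = A *v xn i + B *v un i"
      using Suc.IH first_input[of i] True Suc_leD[OF Suc.prems(2)] by simp
    finally show ?thesis
      using nominal by simp
  next
    case False
    then have "\<gamma> i"
      using Suc.prems q_eq_imp_received[of k i] by simp
    then have "xp (Suc i) = A *v xn i + B *v un i"
      using est_pred est_x est_u by simp
    then show ?thesis
      using nominal by simp
  qed
qed

end

theorem proposition1:
  fixes A :: "real^'nx^'nx" and B :: "real^'nu^'nx"
    and K Kb :: "real^'nx^'nu"
    and W X :: "(real^'nx) set" and U :: "(real^'nu) set"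
    and Q P T :: "real^'nx^'nx" and R :: "real^'nu^'nu"
    and xr :: "real^'nx" and lam :: real and N :: nat
    and \<theta> \<gamma> :: "nat \<Rightarrow> bool" and q :: "nat \<Rightarrow> int" and s :: "nat \<Rightarrow> nat"
    and ustar :: "nat \<Rightarrow> nat \<Rightarrow> real^'nu" and xbs :: "nat \<Rightarrow> real^'nx" and ubs :: "nat \<Rightarrow> real^'nu"
    and x xn xp xh w :: "nat \<Rightarrow> real^'nx" and u un uh :: "nat \<Rightarrow> real^'nu"
    and k :: nat
  assumes stab: "stabilizable A B"
    and W: "polyhedron W" "compact W" "0 \<in> interior W"
    and X: "polyhedron X" "bounded X" "0 \<in> interior X"
    and U: "polyhedron U" "bounded U" "0 \<in> interior U"
    and K: "spectral_radius (A - B ** K) < 1"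
    and Kb: "spectral_radius (A - B ** Kb) < 1"
    and lam: "0 < lam" "lam < 1"
    and N: "0 < N"
    and QRT: "psd Q" "pd R" "pd T"
    and P: "P = transpose (A - B ** Kb) ** P ** (A - B ** Kb) + Q + transpose Kb ** R ** Kb"
    and dist: "\<forall>j. w j \<in> W"
    and plant: "\<forall>j. x (Suc j) = A *v x j + B *v u j + w j"
    and anc: "\<forall>j. u j = un j - K *v (x j - xn j)"
    and nominal: "\<forall>j. xn (Suc j) = A *v xn j + B *v un j"
    and actuator: "\<forall>j. un j = (if j - s j < N then ustar (s j) (j - s j)
                                 else ubs (s j) + Kb *v xbs (s j) - Kb *v xn j)"
    and s_def: "\<forall>j. s j = (if Theta \<theta> q j = 1 then j else (if j = 0 then 0 else s (j - 1)))"
    and q0: "q 0 = -1"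
    and q_rec: "\<forall>j. q (Suc j) = (if \<gamma> j then int j else q j)"
    and est_x: "\<forall>j. xh j = (if \<gamma> j then xn j else xp j)"
    and est_u: "\<forall>j. uh j = (if \<gamma> j then un j else ustar j 0)"
    and est_pred: "\<forall>j. xp (Suc j) = A *v xh j + B *v uh j"
    and est0: "xp 0 = xn 0"
    and mpc: "\<forall>j. mpc_optimal A B Kb lam N
                   (X \<ominus>\<^sub>P Zset (A - B ** K) W)
                   (U \<ominus>\<^sub>P ((\<lambda>z. (- K) *v z) ` Zset (A - B ** K) W))
                   Q R P T xr (xp j) (ustar j) (xbs j) (ubs j)"
    and init: "x 0 - xn 0 \<in> Zset (A - B ** K) W"
    and consistent: "Theta \<theta> q k = 1"
  shows "x k \<in> {xp k} \<oplus>\<^sub>M Zset (A - B ** K) W"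
proof -
  interpret reception_index \<gamma> q
    using q0 q_rec by unfold_locales auto
  have error_step: "x (Suc j) - xn (Suc j) = (A - B ** K) *v (x j - xn j) + w j" for j
    using ancillary_error_step[OF plant[rule_format] anc[rule_format] nominal[rule_format]] .
  have tube: "x k - xn k \<in> Zset (A - B ** K) W"
    using Zset_trajectory[where e = "\<lambda>j. x j - xn j", OF init dist[rule_format] error_step] .
  have first_input: "un i = ustar i 0" if "q k < int i" "i \<le> k" for i
  proof -
    have "s i = i"
      using s_def Theta_one_on_window[OF consistent that] by simp
    then show ?thesis
      using actuator N by simp
  qed
  have "xp k = xn k"
    using estimate_eq_nominal_on_window[where u_plan = "\<lambda>j. ustar j 0", OF est_x[rule_format]
        est_u[rule_format] est_pred[rule_format] est0 nominal[rule_format] first_input q_less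
        order_refl] .
  then have "x k = xp k + (x k - xn k)"
    by simp
  then show ?thesis
    unfolding minkowski_sum_def using tube by blast
qed

end
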